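(* Let $V$ be a finite-dimensional real vector space with a metric $\mu$, let $\Phi'$ be a finite set of increasing filtrations on $V$ which has a compatible splitting, and let $\Phi\subset\Phi'$. Assume that $\mu$ gives compatible splittings of $\Phi$. Then there exists $g\in\mathrm{Aut}(V)$ such that $g(W_k)=W_k$ for all $W\in\Phi$ and all $k$, and such that $\mu$ gives compatible splittings of $g\Phi'=\{gW : W\in\Phi'\}$, where $(gW)_k:=g(W_k)$.
   Context: A metric on $V$ is a positive definite symmetric bilinear form. Filtrations $W=(W_k)_{k\in\mathbb Z}$ are increasing, with $W_k=0$ for $k\ll0$ and $W_k=V$ for $k\gg0$. Given a splitting of each $W$ in a finite set $\Phi$ of filtrations, these splittings are called compatible if there is a direct sum decomposition $V=\bigoplus_{w\in\mathbb Z^\Phi}V[w]$ such that for every $W\in\Phi$ and $k\in\mathbb Z$ the weight-$k$ part of the splitting of $W$ equals $\bigoplus_{w(W)=k}V[w]$; $\Phi$ "has a compatible splitting" if such splittings exist. A metric $\mu$ gives, for each $W$, the orthogonal splitting $V=\bigoplus_k V^W_k$ with $V^W_k$ the $\mu$-orthogonal complement of $W_{k-1}$ in $W_k$; "$\mu$ gives compatible splittings of $\Phi$" means these orthogonal splittings are compatible. *)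

theory Defs
  imports "HOL-Analysis.Analysis"
begin

definition is_filtration :: "(int \<Rightarrow> 'a::real_vector set) \<Rightarrow> bool" where
  "is_filtration W \<longleftrightarrow>
     (\<forall>k. subspace (W k)) \<and> (\<forall>k. W k \<subseteq> W (k + 1)) \<and>
     (\<exists>N. \<forall>k. k \<le> - N \<longrightarrow> W k = {0}) \<and>
     (\<exists>N. \<forall>k. k \<ge> N \<longrightarrow> W k = UNIV)"

definition direct_sum_decomp :: "('i \<Rightarrow> 'a::real_vector set) \<Rightarrow> 'i set \<Rightarrow> bool" where
  "direct_sum_decomp U I \<longleftrightarrow>
     (\<forall>i\<in>I. subspace (U i)) \<and>
     span (\<Union>i\<in>I. U i) = UNIV \<and>
     (\<forall>F x. finite F \<and> F \<subseteq> I \<and> (\<forall>i\<in>F. x i \<in> U i) \<and> sum x F = 0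
            \<longrightarrow> (\<forall>i\<in>F. x i = 0))"

definition is_splitting :: "(int \<Rightarrow> 'a::real_vector set) \<Rightarrow> (int \<Rightarrow> 'a set) \<Rightarrow> bool" where
  "is_splitting W S \<longleftrightarrow> direct_sum_decomp S UNIV \<and> (\<forall>k. W k = span (\<Union>j\<in>{..k}. S j))"

text \<open>The splittings spl W (W in Phi) are compatible: there is a decomposition
  V = sum over w in Z^Phi of V[w] with spl W k = sum of V[w] over w(W) = k.\<close>
definition compatible_splittings ::
  "(int \<Rightarrow> 'a::real_vector set) set \<Rightarrow> ((int \<Rightarrow> 'a set) \<Rightarrow> int \<Rightarrow> 'a set) \<Rightarrow> bool" where
  "compatible_splittings Phi spl \<longleftrightarrow>
     (\<forall>W\<in>Phi. is_splitting W (spl W)) \<and>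
     (\<exists>U. direct_sum_decomp U (Phi \<rightarrow>\<^sub>E (UNIV :: int set)) \<and>
          (\<forall>W\<in>Phi. \<forall>k. spl W k = span (\<Union>w\<in>{w \<in> Phi \<rightarrow>\<^sub>E (UNIV :: int set). w W = k}. U w)))"

definition has_compatible_splitting :: "(int \<Rightarrow> 'a::real_vector set) set \<Rightarrow> bool" where
  "has_compatible_splitting Phi \<longleftrightarrow> (\<exists>spl. compatible_splittings Phi spl)"

definition is_metric :: "('a::real_vector \<Rightarrow> 'a \<Rightarrow> real) \<Rightarrow> bool" where
  "is_metric \<mu> \<longleftrightarrow> bilinear \<mu> \<and> (\<forall>x y. \<mu> x y = \<mu> y x) \<and> (\<forall>x. x \<noteq> 0 \<longrightarrow> \<mu> x x > 0)"

definition orth_splitting :: "('a::real_vector \<Rightarrow> 'a \<Rightarrow> real) \<Rightarrow> (int \<Rightarrow> 'a set) \<Rightarrow> int \<Rightarrow> 'a set" where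
  "orth_splitting \<mu> W k = {x \<in> W k. \<forall>y\<in>W (k - 1). \<mu> x y = 0}"

definition gives_compatible_splittings ::
  "('a::real_vector \<Rightarrow> 'a \<Rightarrow> real) \<Rightarrow> (int \<Rightarrow> 'a set) set \<Rightarrow> bool" where
  "gives_compatible_splittings \<mu> Phi \<longleftrightarrow> compatible_splittings Phi (\<lambda>W. orth_splitting \<mu> W)"

definition filt_image :: "('a \<Rightarrow> 'a) \<Rightarrow> (int \<Rightarrow> 'a set) \<Rightarrow> int \<Rightarrow> 'a set" where
  "filt_image g W = (\<lambda>k. g ` W k)"

end

theory Submission
  imports "HOL-Library.Disjoint_Sets" Defs
begin

text \<open>
  Both hypotheses are statements about bases adapted to filtrations: a basis \<open>B\<close> of \<open>V\<close> with a
  weight \<open>wt b W \<in> \<int>\<close> for every vector and filtration, such that \<open>W\<^sub>k\<close> is spanned by the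
  basis vectors of \<open>W\<close>-weight at most \<open>k\<close>. A compatible splitting of \<open>\<Phi>'\<close> yields such a basis
  (choose a basis of each component \<open>V[w]\<close>); if \<open>\<mu>\<close> gives compatible splittings of \<open>\<Phi>\<close>, distinct
  components are \<open>\<mu>\<close>-orthogonal and Gram--Schmidt inside each component yields a \<open>\<mu>\<close>-orthogonal
  basis \<open>E\<close> adapted to \<open>\<Phi>\<close>. Conversely, any \<open>\<mu>\<close>-orthogonal adapted basis makes \<open>\<mu>\<close> give
  compatible splittings.

  For two bases adapted to the same finite \<open>\<Phi>\<close>, the number of vectors of weight \<open>v\<close> is
  the dimension of the intersection of the \<open>W\<^bsub>v W\<^esub>\<close> minus the dimension of the span of
  the vectors of weight strictly below \<open>v\<close>, and both are determined by the filtrations. Hence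
  some bijection \<open>B \<rightarrow> E\<close> preserves the \<open>\<Phi>\<close>-weights; its linear extension \<open>g\<close> fixes every \<open>W \<in> \<Phi>\<close> and maps \<open>B\<close>,
  adapted to \<open>\<Phi>'\<close>, onto the orthogonal basis \<open>E\<close>, now adapted to \<open>g \<Phi>'\<close>.
\<close>

section \<open>Spans and direct sums\<close>

lemma span_UN_span: "span (\<Union>i\<in>J. span (S i)) = span (\<Union>i\<in>J. S i)"
proof (rule antisym)
  show "span (\<Union>i\<in>J. span (S i)) \<subseteq> span (\<Union>i\<in>J. S i)"
    by (rule span_minimal) (auto intro: span_mono[THEN subsetD] simp: subspace_span)
  show "span (\<Union>i\<in>J. S i) \<subseteq> span (\<Union>i\<in>J. span (S i))"
    by (rule span_mono) (auto intro: span_base)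
qed

lemma span_Int_subsets_independent:
  assumes "independent B" "A1 \<subseteq> B" "A2 \<subseteq> B"
  shows "span A1 \<inter> span A2 = span (A1 \<inter> A2)"
proof (rule antisym)
  show "span A1 \<inter> span A2 \<subseteq> span (A1 \<inter> A2)"
  proof
    fix x assume x: "x \<in> span A1 \<inter> span A2"
    let ?R = "representation B x"
    have "?R = representation A1 x" "?R = representation A2 x"
      using representation_extend[OF assms(1)] x assms(2,3) by auto
    then have supp: "{b. ?R b \<noteq> 0} \<subseteq> A1 \<inter> A2"
      using representation_ne_zero[of A1 x] representation_ne_zero[of A2 x] by auto
    have "x \<in> span B" using x assms(2) span_mono by blast
    then have "x = (\<Sum>b | ?R b \<noteq> 0. ?R b *\<^sub>R b)"
      using sum_nonzero_representation_eq[OF assms(1)] by simp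
    also have "\<dots> \<in> span (A1 \<inter> A2)"
      using supp by (intro span_sum span_scale) (auto intro: span_base)
    finally show "x \<in> span (A1 \<inter> A2)" .
  qed
qed (simp add: span_mono)

lemma INT_span_Collect_independent:
  assumes "independent B" "span B = UNIV" "finite Phi"
  shows "(\<Inter>W\<in>Phi. span {b\<in>B. P W b}) = span {b\<in>B. \<forall>W\<in>Phi. P W b}"
  using assms(3)
proof (induction Phi rule: finite_induct)
  case empty
  then show ?case using assms(2) by simp
next
  case (insert W0 F)
  have "(\<Inter>W\<in>insert W0 F. span {b\<in>B. P W b}) = span {b\<in>B. P W0 b} \<inter> span {b\<in>B. \<forall>W\<in>F. P W b}"
    using insert by simp
  also have "\<dots> = span ({b\<in>B. P W0 b} \<inter> {b\<in>B. \<forall>W\<in>F. P W b})"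
    by (rule span_Int_subsets_independent[OF assms(1)]) auto
  also have "{b\<in>B. P W0 b} \<inter> {b\<in>B. \<forall>W\<in>F. P W b} = {b\<in>B. \<forall>W\<in>insert W0 F. P W b}"
    by auto
  finally show ?case .
qed

lemma card_eq_if_span_eq_independent:
  assumes "independent B" "independent E" "A \<subseteq> B" "A' \<subseteq> E" "span A = span A'"
  shows "card A = card A'"
  by (metis assms dim_span_eq_card_independent independent_mono)

lemma direct_sum_decomp_fibres:
  fixes C :: "'a::euclidean_space set"
  assumes indC: "independent C" and spC: "span C = UNIV" and lab: "\<forall>c\<in>C. f c \<in> I"
  shows "direct_sum_decomp (\<lambda>i. span {c\<in>C. f c = i}) I"
  unfolding direct_sum_decomp_def
proof (intro conjI allI impI)
  show "\<forall>i\<in>I. subspace (span {c \<in> C. f c = i})" by (simp add: subspace_span)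
  have "C \<subseteq> (\<Union>i\<in>I. span {c \<in> C. f c = i})" using lab by (auto intro: span_base)
  then show "span (\<Union>i\<in>I. span {c \<in> C. f c = i}) = UNIV"
    using span_mono spC by blast
  fix F x
  assume H: "finite F \<and> F \<subseteq> I \<and> (\<forall>i\<in>F. x i \<in> span {c \<in> C. f c = i}) \<and> sum x F = 0"
  have finC: "finite C" using indC independent_bound by blast
  obtain u where u: "\<And>i. i \<in> F \<Longrightarrow> x i = (\<Sum>c\<in>{c \<in> C. f c = i}. u i c *\<^sub>R c)"
    using H span_finite[of "{c \<in> C. f c = _}"] finC by (simp add: image_iff) metis
  define U where "U c = (if f c \<in> F then u (f c) c else 0)" for c
  have "(\<Sum>c\<in>C. U c *\<^sub>R c) = (\<Sum>c\<in>{c\<in>C. f c \<in> F}. U c *\<^sub>R c)"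
    by (rule sum.mono_neutral_right) (auto simp: finC U_def)
  also have "\<dots> = (\<Sum>i\<in>F. \<Sum>c\<in>{c\<in>{c\<in>C. f c \<in> F}. f c = i}. U c *\<^sub>R c)"
    by (rule sum.group[symmetric]) (use H finC in auto)
  also have "\<dots> = (\<Sum>i\<in>F. x i)"
  proof (rule sum.cong[OF refl])
    fix i assume i: "i \<in> F"
    have "{c\<in>{c\<in>C. f c \<in> F}. f c = i} = {c \<in> C. f c = i}" using i by auto
    then show "(\<Sum>c\<in>{c\<in>{c\<in>C. f c \<in> F}. f c = i}. U c *\<^sub>R c) = x i"
      using i by (simp add: u U_def)
  qed
  also have "\<dots> = 0" using H by simp
  finally have "\<forall>c\<in>C. U c = 0" using indC[unfolded independent_explicit] by blast
  then have "u i c = 0" if "i \<in> F" "c \<in> C" "f c = i" for i c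
    using that by (auto simp: U_def)
  then show "\<forall>i\<in>F. x i = 0" using u by simp
qed

lemma direct_sum_decomp_subspace: "direct_sum_decomp U I \<Longrightarrow> i \<in> I \<Longrightarrow> subspace (U i)"
  by (simp add: direct_sum_decomp_def)

lemma direct_sum_decomp_span: "direct_sum_decomp U I \<Longrightarrow> span (\<Union>i\<in>I. U i) = UNIV"
  by (simp add: direct_sum_decomp_def)

lemma direct_sum_decompD:
  assumes "direct_sum_decomp U I" "finite F" "F \<subseteq> I" "\<forall>i\<in>F. x i \<in> U i" "sum x F = 0" "i \<in> F"
  shows "x i = 0"
proof -
  have "\<forall>F x. finite F \<and> F \<subseteq> I \<and> (\<forall>i\<in>F. x i \<in> U i) \<and> sum x F = 0 \<longrightarrow> (\<forall>i\<in>F. x i = 0)"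
    using assms(1) unfolding direct_sum_decomp_def by (elim conjE)
  then show ?thesis using assms(2-6) by blast
qed

lemma direct_sum_decomp_Int:
  assumes dsd: "direct_sum_decomp U I" and ij: "i \<in> I" "j \<in> I" "i \<noteq> j"
    and x: "x \<in> U i" "x \<in> U j"
  shows "x = 0"
proof -
  define y where "y k = (if k = i then x else - x)" for k
  have "subspace (U j)" using dsd ij(2) by (rule direct_sum_decomp_subspace)
  then have "- x \<in> U j" using x(2) by (rule subspace_neg)
  then have "\<forall>k\<in>{i, j}. y k \<in> U k" using x(1) ij(3) by (simp add: y_def)
  moreover have "sum y {i, j} = 0" using ij(3) by (simp add: y_def)
  ultimately have "y i = 0"
    by (rule direct_sum_decompD[OF dsd, of "{i, j}", rotated 2]) (use ij in simp_all)
  then show ?thesis by (simp add: y_def)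
qed

lemma direct_sum_decomp_independent:
  assumes dsd: "direct_sum_decomp U I" and lab: "\<forall>b\<in>B. lab b \<in> I"
    and fibres: "\<forall>i\<in>I. independent {b\<in>B. lab b = i} \<and> {b\<in>B. lab b = i} \<subseteq> U i"
  shows "independent B"
  unfolding independent_explicit_finite_subsets
proof (intro allI impI ballI)
  fix S u v
  assume S: "S \<subseteq> B" "finite S" "(\<Sum>v\<in>S. u v *\<^sub>R v) = 0" and v: "v \<in> S"
  define x where "x i = (\<Sum>w\<in>{w\<in>S. lab w = i}. u w *\<^sub>R w)" for i
  have "sum x (lab ` S) = (\<Sum>v\<in>S. u v *\<^sub>R v)"
    unfolding x_def by (rule sum.group) (use S in auto)
  moreover have "x i \<in> U i" if "i \<in> lab ` S" for i
  proof -
    have i: "i \<in> I" using that lab S by auto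
    then have "subspace (U i)" by (rule direct_sum_decomp_subspace[OF dsd])
    then show ?thesis
      unfolding x_def using fibres i S by (intro subspace_sum subspace_scale) auto
  qed
  ultimately have "x (lab v) = 0"
    by (intro direct_sum_decompD[OF dsd]) (use S lab v in auto)
  moreover have "independent {b\<in>B. lab b = lab v}" using fibres lab S v by blast
  moreover have "{w\<in>S. lab w = lab v} \<subseteq> {b\<in>B. lab b = lab v}" "finite {w\<in>S. lab w = lab v}"
    using S by auto
  ultimately show "u v = 0"
    unfolding x_def independent_explicit_finite_subsets using v by blast
qed

lemma direct_sum_decomp_obtain_basis:
  fixes U :: "'i \<Rightarrow> 'a::euclidean_space set"
  assumes dsd: "direct_sum_decomp U I"
    and bases: "\<forall>i\<in>I. \<exists>A. independent A \<and> span A = U i \<and> Q A"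
  obtains B lab where "independent B" "span B = UNIV" "\<forall>b\<in>B. lab b \<in> I"
    "\<forall>i\<in>I. span {b\<in>B. lab b = i} = U i" "\<forall>i\<in>I. Q {b\<in>B. lab b = i}"
proof -
  from bases obtain A where A: "\<And>i. i \<in> I \<Longrightarrow> independent (A i) \<and> span (A i) = U i \<and> Q (A i)"
    by metis
  have disj: "i = j" if "i \<in> I" "j \<in> I" "b \<in> A i" "b \<in> A j" for i j b
    using direct_sum_decomp_Int[OF dsd, of i j b] A[OF that(1)] A[OF that(2)] that
    by (metis dependent_zero span_base)
  define B where "B = (\<Union>i\<in>I. A i)"
  define lab where "lab b = (SOME i. i \<in> I \<and> b \<in> A i)" for b
  have lab: "lab b \<in> I \<and> b \<in> A (lab b)" if "b \<in> B" for b
    unfolding lab_def by (rule someI_ex) (use that B_def in auto)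
  have fibre: "{b\<in>B. lab b = i} = A i" if "i \<in> I" for i
    using that lab disj by (auto simp: B_def)
  have A_U: "A i \<subseteq> U i" if "i \<in> I" for i
    using A[OF that] span_base by blast
  have "independent B"
    by (rule direct_sum_decomp_independent[OF dsd, of B lab]) (use lab fibre A A_U in auto)
  moreover have "span B = UNIV"
  proof -
    have "UNIV = span (\<Union>i\<in>I. U i)" using direct_sum_decomp_span[OF dsd] by simp
    also have "\<dots> = span B" unfolding B_def using span_UN_span[where J = I and S = A] A by simp
    finally show ?thesis by simp
  qed
  moreover have "\<forall>i\<in>I. span {b\<in>B. lab b = i} = U i" "\<forall>i\<in>I. Q {b\<in>B. lab b = i}"
    using fibre A by simp_all
  ultimately show ?thesis using that lab by blast
qed

section \<open>Orthogonality with respect to a metric\<close>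

lemma metric_sym: "is_metric \<mu> \<Longrightarrow> \<mu> x y = \<mu> y x"
  by (simp add: is_metric_def)

lemma metric_pos: "is_metric \<mu> \<Longrightarrow> x \<noteq> 0 \<Longrightarrow> 0 < \<mu> x x"
  by (simp add: is_metric_def)

lemma metric_linear_left: "is_metric \<mu> \<Longrightarrow> linear (\<lambda>x. \<mu> x y)"
  by (simp add: is_metric_def bilinear_def)

lemma metric_linear_right: "is_metric \<mu> \<Longrightarrow> linear (\<mu> x)"
  by (simp add: is_metric_def bilinear_def)

lemma metric_sum_orthogonal:
  assumes mu: "is_metric \<mu>" and "finite A" "pairwise (\<lambda>x y. \<mu> x y = 0) A" "a \<in> A"
  shows "\<mu> (\<Sum>b\<in>A. c b *\<^sub>R b) a = c a * \<mu> a a"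
proof -
  have "\<mu> (\<Sum>b\<in>A. c b *\<^sub>R b) a = (\<Sum>b\<in>A. c b * \<mu> b a)"
    using linear_sum[OF metric_linear_left[OF mu, of a], of "\<lambda>b. c b *\<^sub>R b" A]
      linear_scale[OF metric_linear_left[OF mu, of a]] by simp
  also have "\<dots> = c a * \<mu> a a + (\<Sum>b\<in>A - {a}. c b * \<mu> b a)"
    by (rule sum.remove[OF assms(2,4)])
  also have "(\<Sum>b\<in>A - {a}. c b * \<mu> b a) = 0"
    using assms(3,4) by (intro sum.neutral) (auto simp: pairwise_def)
  finally show ?thesis by simp
qed

lemma metric_orthogonal_independent:
  assumes mu: "is_metric \<mu>" and A: "finite A" "0 \<notin> A" "pairwise (\<lambda>x y. \<mu> x y = 0) A"
  shows "independent A"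
proof (rule independent_if_scalars_zero[OF A(1)])
  fix c a assume sum0: "(\<Sum>b\<in>A. c b *\<^sub>R b) = 0" and a: "a \<in> A"
  have "c a * \<mu> a a = 0"
    using metric_sum_orthogonal[OF mu A(1,3) a, of c] sum0 linear_0[OF metric_linear_left[OF mu]]
    by simp
  moreover have "\<mu> a a > 0" using metric_pos[OF mu] A(2) a by metis
  ultimately show "c a = 0" by simp
qed

lemma metric_orthogonal_spanning_set:
  fixes T :: "'a::real_vector set"
  assumes mu: "is_metric \<mu>" and "finite T"
  obtains A where "finite A" "span A = span T" "0 \<notin> A" "pairwise (\<lambda>x y. \<mu> x y = 0) A"
proof -
  have "\<exists>A. finite A \<and> span A = span T \<and> 0 \<notin> A \<and> pairwise (\<lambda>x y. \<mu> x y = 0) A"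
    using \<open>finite T\<close>
  proof (induction T rule: finite_induct)
    case empty
    show ?case by (intro exI[of _ "{}"]) simp
  next
    case (insert x T)
    then obtain A where A: "finite A" "span A = span T" "0 \<notin> A" "pairwise (\<lambda>x y. \<mu> x y = 0) A"
      by blast
    define p where "p = (\<Sum>a\<in>A. (\<mu> x a / \<mu> a a) *\<^sub>R a)"
    have p: "p \<in> span A" unfolding p_def by (intro span_sum span_scale span_base)
    show ?case
    proof (cases "x - p = 0")
      case True
      then have "x \<in> span T" using p A(2) by simp
      then show ?thesis using A by (intro exI[of _ A]) (simp add: span_redundant)
    next
      case False
      have "\<mu> (x - p) a = 0" if "a \<in> A" for a
      proof -
        have "\<mu> a a \<noteq> 0" using metric_pos[OF mu] A(3) that by (metis less_irrefl)
        then have "\<mu> p a = \<mu> x a"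
          unfolding p_def using metric_sum_orthogonal[OF mu A(1,4) that] by simp
        then show ?thesis using linear_diff[OF metric_linear_left[OF mu]] by simp
      qed
      then have "pairwise (\<lambda>x y. \<mu> x y = 0) (insert (x - p) A)"
        using A(4) metric_sym[OF mu] by (auto simp: pairwise_insert)
      moreover have "span (insert (x - p) A) = span (insert x T)"
      proof -
        have "span (insert (x - p) A) = span (insert x A)"
          by (rule eq_span_insert_eq) (simp add: p span_neg)
        then show ?thesis by (simp add: span_insert A(2))
      qed
      ultimately show ?thesis using A False by (intro exI[of _ "insert (x - p) A"]) simp
    qed
  qed
  then show ?thesis using that by blast
qed

lemma metric_orthogonal_basis:
  fixes S :: "'a::euclidean_space set"
  assumes mu: "is_metric \<mu>" and "subspace S"
  obtains A where "independent A" "span A = S" "pairwise (\<lambda>x y. \<mu> x y = 0) A"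
proof -
  obtain T where "finite T" "span T = S" using basis_subspace_exists[OF \<open>subspace S\<close>] by metis
  moreover obtain A where "finite A" "span A = span T" "0 \<notin> A" "pairwise (\<lambda>x y. \<mu> x y = 0) A"
    using metric_orthogonal_spanning_set[OF mu \<open>finite T\<close>] by blast
  ultimately show ?thesis using that metric_orthogonal_independent[OF mu] by metis
qed

lemma metric_orthogonal_complement_span:
  assumes mu: "is_metric \<mu>" and A: "finite A" "0 \<notin> A" "pairwise (\<lambda>x y. \<mu> x y = 0) A"
    and "A' \<subseteq> A"
  shows "{x \<in> span A. \<forall>y\<in>span A'. \<mu> x y = 0} = span (A - A')"
proof (rule antisym)
  show "{x \<in> span A. \<forall>y\<in>span A'. \<mu> x y = 0} \<subseteq> span (A - A')"
  proof clarify
    fix x assume x: "x \<in> span A" and perp: "\<forall>y\<in>span A'. \<mu> x y = 0"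
    obtain c where c: "x = (\<Sum>a\<in>A. c a *\<^sub>R a)" using x span_finite[OF A(1)] by auto
    have "c a = 0" if "a \<in> A'" for a
    proof -
      have a: "a \<in> A" using that \<open>A' \<subseteq> A\<close> by auto
      have "c a * \<mu> a a = 0"
        using metric_sum_orthogonal[OF mu A(1,3) a] c perp that span_base by metis
      moreover have "\<mu> a a > 0" using metric_pos[OF mu] A(2) a by metis
      ultimately show ?thesis by simp
    qed
    then have "x = (\<Sum>a\<in>A - A'. c a *\<^sub>R a)"
      unfolding c by (intro sum.mono_neutral_right) (use A(1) in auto)
    also have "\<dots> \<in> span (A - A')" by (intro span_sum span_scale) (auto intro: span_base)
    finally show "x \<in> span (A - A')" .
  qed
  show "span (A - A') \<subseteq> {x \<in> span A. \<forall>y\<in>span A'. \<mu> x y = 0}"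
  proof (intro subsetI CollectI conjI ballI)
    fix x assume x: "x \<in> span (A - A')"
    then show "x \<in> span A" using span_mono[of "A - A'" A] by blast
    fix y assume y: "y \<in> span A'"
    have "span A' \<subseteq> {y. \<mu> a y = 0}" if a: "a \<in> A - A'" for a
    proof (intro span_minimal linear_subspace_kernel[OF metric_linear_right[OF mu]] subsetI CollectI)
      fix z assume "z \<in> A'"
      then have "z \<noteq> a" "z \<in> A" using a \<open>A' \<subseteq> A\<close> by auto
      then show "\<mu> a z = 0" using A(3) a unfolding pairwise_def by auto
    qed
    then have "span (A - A') \<subseteq> {x. \<mu> x y = 0}"
      using y by (intro span_minimal linear_subspace_kernel[OF metric_linear_left[OF mu]]) auto
    then show "\<mu> x y = 0" using x by blast
  qed
qed

section \<open>Bases adapted to filtrations\<close>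

definition adapted_basis ::
  "(int \<Rightarrow> 'a::real_vector set) set \<Rightarrow> 'a set \<Rightarrow> ('a \<Rightarrow> (int \<Rightarrow> 'a set) \<Rightarrow> int) \<Rightarrow> bool" where
  "adapted_basis Phi B wt \<longleftrightarrow> independent B \<and> span B = UNIV \<and>
     (\<forall>W\<in>Phi. \<forall>k. W k = span {b\<in>B. wt b W \<le> k})"

lemma adapted_basisD:
  assumes "adapted_basis Phi B wt"
  shows "independent B" "span B = UNIV"
  using assms by (simp_all add: adapted_basis_def)

lemma adapted_basis_span_eq:
  "adapted_basis Phi B wt \<Longrightarrow> W \<in> Phi \<Longrightarrow> span {b\<in>B. wt b W \<le> k} = W k"
  by (simp add: adapted_basis_def)

lemma adapted_basis_mono: "Phi \<subseteq> Phi' \<Longrightarrow> adapted_basis Phi' B wt \<Longrightarrow> adapted_basis Phi B wt"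
  by (auto simp: adapted_basis_def)

lemma is_splitting_span: "is_splitting W S \<Longrightarrow> W k = span (\<Union>j\<in>{..k}. S j)"
  by (simp add: is_splitting_def)

lemma is_splitting_mono:
  assumes "is_splitting W S" "j \<le> k"
  shows "W j \<subseteq> W k"
proof -
  have "(\<Union>i\<in>{..j}. S i) \<subseteq> (\<Union>i\<in>{..k}. S i)" using assms(2) by (intro UN_mono) auto
  then show ?thesis using is_splitting_span[OF assms(1)] span_mono by metis
qed

lemma adapted_basis_is_splitting:
  fixes B :: "'a::euclidean_space set"
  assumes B: "adapted_basis Phi B wt" and W: "W \<in> Phi"
  shows "is_splitting W (\<lambda>k. span {b\<in>B. wt b W = k})"
  unfolding is_splitting_def
proof (intro conjI allI)
  show "direct_sum_decomp (\<lambda>k. span {b\<in>B. wt b W = k}) UNIV"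
    using B by (intro direct_sum_decomp_fibres) (auto simp: adapted_basis_def)
  fix k
  have "span (\<Union>j\<in>{..k}. span {b\<in>B. wt b W = j}) = span (\<Union>j\<in>{..k}. {b\<in>B. wt b W = j})"
    by (rule span_UN_span)
  also have "(\<Union>j\<in>{..k}. {b\<in>B. wt b W = j}) = {b\<in>B. wt b W \<le> k}" by auto
  finally show "W k = span (\<Union>j\<in>{..k}. span {b\<in>B. wt b W = j})"
    using B W unfolding adapted_basis_def by simp
qed

lemma adapted_basis_of_compatible_decomp:
  fixes Phi :: "(int \<Rightarrow> 'a::euclidean_space set) set"
  assumes split: "\<forall>W\<in>Phi. is_splitting W (spl W)"
    and dsd: "direct_sum_decomp U (Phi \<rightarrow>\<^sub>E (UNIV :: int set))"
    and spl: "\<forall>W\<in>Phi. \<forall>k. spl W k = span (\<Union>w\<in>{w \<in> Phi \<rightarrow>\<^sub>E (UNIV :: int set). w W = k}. U w)"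
    and bases: "\<forall>w\<in>Phi \<rightarrow>\<^sub>E (UNIV :: int set). \<exists>A. independent A \<and> span A = U w \<and> Q A"
  obtains B wt where "adapted_basis Phi B wt" "\<forall>b\<in>B. wt b \<in> Phi \<rightarrow>\<^sub>E UNIV \<and> b \<in> U (wt b)"
    "\<forall>w\<in>Phi \<rightarrow>\<^sub>E (UNIV :: int set). Q {b\<in>B. wt b = w}"
proof -
  obtain B wt where B: "independent B" "span B = UNIV" and wt: "\<forall>b\<in>B. wt b \<in> Phi \<rightarrow>\<^sub>E UNIV"
    and fibre: "\<forall>w\<in>Phi \<rightarrow>\<^sub>E UNIV. span {b\<in>B. wt b = w} = U w"
    and Q: "\<forall>w\<in>Phi \<rightarrow>\<^sub>E UNIV. Q {b\<in>B. wt b = w}"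
    by (rule direct_sum_decomp_obtain_basis[OF dsd bases])
  have spl_eq: "spl W j = span {b\<in>B. wt b W = j}" if W: "W \<in> Phi" for W j
  proof -
    have "(\<Union>w\<in>{w \<in> Phi \<rightarrow>\<^sub>E UNIV. w W = j}. U w)
        = (\<Union>w\<in>{w \<in> Phi \<rightarrow>\<^sub>E UNIV. w W = j}. span {b\<in>B. wt b = w})"
      using fibre by (intro SUP_cong) auto
    then have "spl W j = span (\<Union>w\<in>{w \<in> Phi \<rightarrow>\<^sub>E UNIV. w W = j}. span {b\<in>B. wt b = w})"
      using spl W by simp
    also have "\<dots> = span (\<Union>w\<in>{w \<in> Phi \<rightarrow>\<^sub>E UNIV. w W = j}. {b\<in>B. wt b = w})"
      by (rule span_UN_span)
    also have "(\<Union>w\<in>{w \<in> Phi \<rightarrow>\<^sub>E UNIV. w W = j}. {b\<in>B. wt b = w}) = {b\<in>B. wt b W = j}"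
      using wt by auto
    finally show ?thesis .
  qed
  have "W k = span {b\<in>B. wt b W \<le> k}" if W: "W \<in> Phi" for W k
  proof -
    have "W k = span (\<Union>j\<in>{..k}. spl W j)"
      using is_splitting_span split W by blast
    also have "\<dots> = span (\<Union>j\<in>{..k}. span {b\<in>B. wt b W = j})"
      by (simp only: spl_eq[OF W])
    also have "\<dots> = span (\<Union>j\<in>{..k}. {b\<in>B. wt b W = j})" by (rule span_UN_span)
    also have "(\<Union>j\<in>{..k}. {b\<in>B. wt b W = j}) = {b\<in>B. wt b W \<le> k}" by auto
    finally show ?thesis .
  qed
  then have "adapted_basis Phi B wt" using B by (simp add: adapted_basis_def)
  moreover have "wt b \<in> Phi \<rightarrow>\<^sub>E UNIV \<and> b \<in> U (wt b)" if "b \<in> B" for b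
  proof -
    have "b \<in> span {b'\<in>B. wt b' = wt b}" using that by (intro span_base) simp
    then show ?thesis using fibre wt that by simp
  qed
  ultimately show ?thesis using Q by (intro that) auto
qed

lemma has_compatible_splitting_adapted_basis:
  fixes Phi :: "(int \<Rightarrow> 'a::euclidean_space set) set"
  assumes "has_compatible_splitting Phi"
  obtains B wt where "adapted_basis Phi B wt"
proof -
  from assms obtain spl where "compatible_splittings Phi spl"
    unfolding has_compatible_splitting_def by blast
  then obtain U where split: "\<forall>W\<in>Phi. is_splitting W (spl W)"
    and dsd: "direct_sum_decomp U (Phi \<rightarrow>\<^sub>E (UNIV :: int set))"
    and spl: "\<forall>W\<in>Phi. \<forall>k. spl W k = span (\<Union>w\<in>{w \<in> Phi \<rightarrow>\<^sub>E (UNIV :: int set). w W = k}. U w)"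
    unfolding compatible_splittings_def by auto
  have "\<exists>A. independent A \<and> span A = U w \<and> True" if "w \<in> Phi \<rightarrow>\<^sub>E UNIV" for w
    by (rule basis_subspace_exists[OF direct_sum_decomp_subspace[OF dsd that]]) blast
  then have "\<forall>w\<in>Phi \<rightarrow>\<^sub>E UNIV. \<exists>A. independent A \<and> span A = U w \<and> True" by blast
  then show ?thesis by (rule adapted_basis_of_compatible_decomp[OF split dsd spl]) (erule that)
qed

lemma orth_splitting_decomp_orthogonal:
  assumes mu: "is_metric \<mu>"
    and split: "\<forall>W\<in>Phi. is_splitting W (orth_splitting \<mu> W)"
    and spl: "\<forall>W\<in>Phi. \<forall>k. orth_splitting \<mu> W k
                = span (\<Union>w\<in>{w \<in> Phi \<rightarrow>\<^sub>E (UNIV :: int set). w W = k}. U w)"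
    and v: "v \<in> Phi \<rightarrow>\<^sub>E UNIV" "v' \<in> Phi \<rightarrow>\<^sub>E UNIV" "v \<noteq> v'"
    and x: "x \<in> U v" and y: "y \<in> U v'"
  shows "\<mu> x y = 0"
proof -
  have comp: "z \<in> orth_splitting \<mu> W (w W)" if "W \<in> Phi" "w \<in> Phi \<rightarrow>\<^sub>E UNIV" "z \<in> U w" for W w z
  proof -
    have "z \<in> span (\<Union>w'\<in>{w' \<in> Phi \<rightarrow>\<^sub>E UNIV. w' W = w W}. U w')"
      using that by (intro span_base) blast
    then show ?thesis using spl that(1) by simp
  qed
  have lt: "\<mu> z' z = 0"
    if "W \<in> Phi" "w \<in> Phi \<rightarrow>\<^sub>E UNIV" "w' \<in> Phi \<rightarrow>\<^sub>E UNIV" "z \<in> U w" "z' \<in> U w'" "w W < w' W"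
    for W w w' z z'
  proof -
    have "z \<in> W (w W)" using comp[OF that(1,2,4)] by (simp add: orth_splitting_def)
    then have "z \<in> W (w' W - 1)"
      using is_splitting_mono[OF split[rule_format, OF that(1)], of "w W" "w' W - 1"] that(6) by auto
    then show ?thesis using comp[OF that(1,3,5)] by (simp add: orth_splitting_def)
  qed
  obtain W where W: "W \<in> Phi" "v W \<noteq> v' W" using v by (metis PiE_ext)
  then consider "v W < v' W" | "v' W < v W" by linarith
  then show ?thesis
    using lt[OF W(1) v(1,2) x y] lt[OF W(1) v(2,1) y x] metric_sym[OF mu] by cases auto
qed

lemma gives_compatible_splittings_orthogonal_adapted_basis:
  fixes \<mu> :: "'a::euclidean_space \<Rightarrow> 'a \<Rightarrow> real"
  assumes mu: "is_metric \<mu>" and "gives_compatible_splittings \<mu> Phi"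
  obtains E wt where "adapted_basis Phi E wt" "pairwise (\<lambda>x y. \<mu> x y = 0) E"
proof -
  obtain U where split: "\<forall>W\<in>Phi. is_splitting W (orth_splitting \<mu> W)"
    and dsd: "direct_sum_decomp U (Phi \<rightarrow>\<^sub>E (UNIV :: int set))"
    and spl: "\<forall>W\<in>Phi. \<forall>k. orth_splitting \<mu> W k
                = span (\<Union>w\<in>{w \<in> Phi \<rightarrow>\<^sub>E (UNIV :: int set). w W = k}. U w)"
    using assms(2) unfolding gives_compatible_splittings_def compatible_splittings_def by auto
  have "\<exists>A. independent A \<and> span A = U w \<and> pairwise (\<lambda>x y. \<mu> x y = 0) A"
    if "w \<in> Phi \<rightarrow>\<^sub>E UNIV" for w
    using metric_orthogonal_basis[OF mu direct_sum_decomp_subspace[OF dsd that]] by blast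
  then have "\<forall>w\<in>Phi \<rightarrow>\<^sub>E UNIV. \<exists>A. independent A \<and> span A = U w \<and> pairwise (\<lambda>x y. \<mu> x y = 0) A"
    by blast
  then obtain E wt where E: "adapted_basis Phi E wt"
    and wt: "\<forall>b\<in>E. wt b \<in> Phi \<rightarrow>\<^sub>E UNIV \<and> b \<in> U (wt b)"
    and fibres: "\<forall>w\<in>Phi \<rightarrow>\<^sub>E (UNIV :: int set). pairwise (\<lambda>x y. \<mu> x y = 0) {b\<in>E. wt b = w}"
    by (rule adapted_basis_of_compatible_decomp[OF split dsd spl])
  have "pairwise (\<lambda>x y. \<mu> x y = 0) E"
  proof (rule pairwiseI)
    fix x y assume xy: "x \<in> E" "y \<in> E" "x \<noteq> y"
    show "\<mu> x y = 0"
    proof (cases "wt x = wt y")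
      case True
      then have "x \<in> {b\<in>E. wt b = wt x}" "y \<in> {b\<in>E. wt b = wt x}" using xy by auto
      then show ?thesis using fibres wt xy unfolding pairwise_def by blast
    next
      case False
      then show ?thesis using orth_splitting_decomp_orthogonal[OF mu split spl] wt xy by blast
    qed
  qed
  then show ?thesis using that E by blast
qed

lemma orthogonal_adapted_basis_gives_compatible_splittings:
  fixes \<mu> :: "'a::euclidean_space \<Rightarrow> 'a \<Rightarrow> real"
  assumes mu: "is_metric \<mu>" and E: "adapted_basis Phi E wt" and orth: "pairwise (\<lambda>x y. \<mu> x y = 0) E"
  shows "gives_compatible_splittings \<mu> Phi"
proof -
  have indE: "independent E" and spE: "span E = UNIV"
    and filt: "\<And>W k. W \<in> Phi \<Longrightarrow> W k = span {e\<in>E. wt e W \<le> k}"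
    using E by (auto simp: adapted_basis_def)
  have finE: "finite E" and E0: "0 \<notin> E" using indE independent_bound dependent_zero by blast+
  have orth_spl: "orth_splitting \<mu> W = (\<lambda>k. span {e\<in>E. wt e W = k})" if W: "W \<in> Phi" for W
  proof
    fix k
    have "orth_splitting \<mu> W k
        = {x \<in> span {e\<in>E. wt e W \<le> k}. \<forall>y\<in>span {e\<in>E. wt e W \<le> k - 1}. \<mu> x y = 0}"
      unfolding orth_splitting_def filt[OF W, of k] filt[OF W, of "k - 1"] ..
    also have "\<dots> = span ({e\<in>E. wt e W \<le> k} - {e\<in>E. wt e W \<le> k - 1})"
      using finE E0 pairwise_subset[OF orth]
      by (intro metric_orthogonal_complement_span[OF mu]) auto
    also have "{e\<in>E. wt e W \<le> k} - {e\<in>E. wt e W \<le> k - 1} = {e\<in>E. wt e W = k}" by auto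
    finally show "orth_splitting \<mu> W k = span {e\<in>E. wt e W = k}" .
  qed
  \<comment> \<open>Restricting makes the weight vectors extensional, as the index set \<open>Phi \<rightarrow>\<^sub>E UNIV\<close> requires.\<close>
  define wt' where "wt' e = restrict (wt e) Phi" for e
  show ?thesis
    unfolding gives_compatible_splittings_def compatible_splittings_def
  proof (intro conjI ballI allI exI[of _ "\<lambda>w. span {e\<in>E. wt' e = w}"])
    show "is_splitting W (orth_splitting \<mu> W)" if "W \<in> Phi" for W
      using adapted_basis_is_splitting[OF E that] orth_spl[OF that] by simp
    show "direct_sum_decomp (\<lambda>w. span {e\<in>E. wt' e = w}) (Phi \<rightarrow>\<^sub>E UNIV)"
      by (rule direct_sum_decomp_fibres[OF indE spE]) (simp add: wt'_def)
    show "orth_splitting \<mu> W k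
        = span (\<Union>w\<in>{w \<in> Phi \<rightarrow>\<^sub>E UNIV. w W = k}. span {e\<in>E. wt' e = w})" if W: "W \<in> Phi" for W k
    proof -
      have "(\<Union>w\<in>{w \<in> Phi \<rightarrow>\<^sub>E UNIV. w W = k}. {e\<in>E. wt' e = w}) = {e\<in>E. wt e W = k}"
        using W by (auto simp: wt'_def)
      then show ?thesis by (simp add: span_UN_span orth_spl[OF W])
    qed
  qed
qed

section \<open>Comparing adapted bases\<close>

lemma adapted_bases_card_weight_fibre:
  fixes B E :: "'a::euclidean_space set"
  assumes fin: "finite Phi" and B: "adapted_basis Phi B wt" and E: "adapted_basis Phi E wt'"
  shows "card {b\<in>B. \<forall>W\<in>Phi. wt b W = v W} = card {e\<in>E. \<forall>W\<in>Phi. wt' e W = v W}"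
proof -
  define below where "below f S u = {x\<in>S. \<forall>W\<in>Phi. f x W \<le> u W}"
    for f :: "'a \<Rightarrow> (int \<Rightarrow> 'a set) \<Rightarrow> int" and S and u :: "(int \<Rightarrow> 'a set) \<Rightarrow> int"
  define strictly_below where "strictly_below f S =
      {x\<in>S. (\<forall>W\<in>Phi. f x W \<le> v W) \<and> \<not> (\<forall>W\<in>Phi. f x W = v W)}"
    for f :: "'a \<Rightarrow> (int \<Rightarrow> 'a set) \<Rightarrow> int" and S
  have span_below: "span (below wt B u) = span (below wt' E u)" for u
  proof -
    have "span (below wt B u) = (\<Inter>W\<in>Phi. span {b\<in>B. wt b W \<le> u W})"
      unfolding below_def
      by (rule INT_span_Collect_independent[OF adapted_basisD[OF B] fin, symmetric])
    also have "\<dots> = (\<Inter>W\<in>Phi. span {e\<in>E. wt' e W \<le> u W})"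
      by (intro INF_cong refl) (simp add: adapted_basis_span_eq[OF B] adapted_basis_span_eq[OF E])
    also have "\<dots> = span (below wt' E u)"
      unfolding below_def by (rule INT_span_Collect_independent[OF adapted_basisD[OF E] fin])
    finally show ?thesis .
  qed
  have strictly_below_UN: "strictly_below f S = (\<Union>W0\<in>Phi. below f S (v(W0 := v W0 - 1)))" for f S
  proof (rule set_eqI, rule iffI)
    fix x assume "x \<in> strictly_below f S"
    then obtain W0 where "W0 \<in> Phi" "f x W0 \<le> v W0 - 1" "x \<in> below f S v"
      unfolding strictly_below_def below_def by force
    then show "x \<in> (\<Union>W0\<in>Phi. below f S (v(W0 := v W0 - 1)))"
      unfolding below_def by (intro UN_I[of W0]) auto
  next
    fix x assume "x \<in> (\<Union>W0\<in>Phi. below f S (v(W0 := v W0 - 1)))"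
    then obtain W0 where W0: "W0 \<in> Phi" and x: "x \<in> below f S (v(W0 := v W0 - 1))" by blast
    then have "f x W0 \<le> v W0 - 1" unfolding below_def by force
    moreover have "f x W \<le> v W" if "W \<in> Phi" for W
      using x that unfolding below_def by (cases "W = W0") force+
    ultimately show "x \<in> strictly_below f S"
      using x W0 unfolding strictly_below_def below_def by force
  qed
  have span_strictly_below: "span (strictly_below wt B) = span (strictly_below wt' E)"
    unfolding strictly_below_UN
    by (subst (1 2) span_UN_span[symmetric]) (simp only: span_below)
  have card_split: "card (below f S v) = card (strictly_below f S) + card {x\<in>S. \<forall>W\<in>Phi. f x W = v W}"
    if "finite S" for f S
  proof -
    have "below f S v = strictly_below f S \<union> {x\<in>S. \<forall>W\<in>Phi. f x W = v W}"
      unfolding below_def strictly_below_def by auto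
    moreover have "finite (strictly_below f S)" "finite {x\<in>S. \<forall>W\<in>Phi. f x W = v W}"
      using that by (simp_all add: strictly_below_def)
    ultimately show ?thesis
      by (simp add: card_Un_disjoint disjoint_iff strictly_below_def)
  qed
  have "card (below wt B v) = card (below wt' E v)"
    by (rule card_eq_if_span_eq_independent[OF adapted_basisD(1)[OF B] adapted_basisD(1)[OF E]
          _ _ span_below]) (auto simp: below_def)
  moreover have "card (strictly_below wt B) = card (strictly_below wt' E)"
    by (rule card_eq_if_span_eq_independent[OF adapted_basisD(1)[OF B] adapted_basisD(1)[OF E]
          _ _ span_strictly_below]) (auto simp: strictly_below_def)
  moreover have "finite B" "finite E"
    using adapted_basisD(1)[OF B] adapted_basisD(1)[OF E] independent_bound by blast+
  ultimately show ?thesis using card_split by simp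
qed

lemma adapted_bases_weight_preserving_bij:
  fixes B E :: "'a::euclidean_space set"
  assumes fin: "finite Phi" and B: "adapted_basis Phi B wt" and E: "adapted_basis Phi E wt'"
  obtains s where "bij_betw s B E" "\<forall>b\<in>B. \<forall>W\<in>Phi. wt' (s b) W = wt b W"
proof -
  define fibre where "fibre f S w = {x\<in>S. restrict (f x) Phi = w}"
    for f :: "'a \<Rightarrow> (int \<Rightarrow> 'a set) \<Rightarrow> int" and S and w
  have fibre_eq: "fibre f S w = {x\<in>S. \<forall>W\<in>Phi. f x W = w W}" if "w \<in> Phi \<rightarrow>\<^sub>E UNIV" for f S w
    using that by (auto simp: fibre_def fun_eq_iff PiE_iff extensional_def)
  have UN_fibre: "(\<Union>w\<in>Phi \<rightarrow>\<^sub>E UNIV. fibre f S w) = S" for f S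
    by (auto simp: fibre_def)
  have "finite B" "finite E"
    using adapted_basisD(1)[OF B] adapted_basisD(1)[OF E] independent_bound by blast+
  then have "\<exists>h. bij_betw h (fibre wt B w) (fibre wt' E w)" if "w \<in> Phi \<rightarrow>\<^sub>E UNIV" for w
    using adapted_bases_card_weight_fibre[OF fin B E, of w]
    by (intro finite_same_card_bij) (simp_all add: fibre_eq[OF that])
  then obtain h where h: "\<And>w. w \<in> Phi \<rightarrow>\<^sub>E UNIV \<Longrightarrow> bij_betw (h w) (fibre wt B w) (fibre wt' E w)"
    by metis
  define s where "s b = h (restrict (wt b) Phi) b" for b
  have s_fibre: "bij_betw s (fibre wt B w) (fibre wt' E w)" if "w \<in> Phi \<rightarrow>\<^sub>E UNIV" for w
  proof -
    have "bij_betw s (fibre wt B w) (fibre wt' E w) = bij_betw (h w) (fibre wt B w) (fibre wt' E w)"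
      by (rule bij_betw_cong) (simp add: s_def fibre_def)
    then show ?thesis using h[OF that] by simp
  qed
  have "bij_betw s (\<Union>w\<in>Phi \<rightarrow>\<^sub>E UNIV. fibre wt B w) (\<Union>w\<in>Phi \<rightarrow>\<^sub>E UNIV. fibre wt' E w)"
    by (rule bij_betw_UNION_disjoint[OF _ s_fibre]) (auto simp: disjoint_family_on_def fibre_def)
  then have "bij_betw s B E" by (simp only: UN_fibre)
  moreover have "wt' (s b) W = wt b W" if "b \<in> B" "W \<in> Phi" for b W
  proof -
    have "b \<in> fibre wt B (restrict (wt b) Phi)" using that by (simp add: fibre_def)
    then have "s b \<in> fibre wt' E (restrict (wt b) Phi)"
      using s_fibre[of "restrict (wt b) Phi"] bij_betwE by auto
    then have "restrict (wt' (s b)) Phi = restrict (wt b) Phi" by (simp add: fibre_def)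
    then show ?thesis using that(2) by (metis restrict_apply')
  qed
  ultimately show ?thesis using that by blast
qed

lemma bij_betw_bases_linear_extension:
  fixes B E :: "'a::euclidean_space set"
  assumes "independent B" "span B = UNIV" "span E = UNIV" "bij_betw s B E"
  obtains g where "linear g" "bij g" "\<forall>b\<in>B. g b = s b"
proof -
  obtain g where g: "linear g" "\<forall>b\<in>B. g b = s b"
    using linear_independent_extend[OF assms(1)] by blast
  have "range g = span (g ` B)" using span_linear_image[OF g(1), of B] assms(2) by simp
  also have "g ` B = E" using g(2) assms(4) by (simp add: bij_betw_def)
  finally have "surj g" using assms(3) by simp
  then have "bij g" using linear_surj_imp_inj[OF g(1)] by (simp add: bij_def)
  then show ?thesis using that g by blast
qed

lemma filt_image_inv: "bij g \<Longrightarrow> filt_image (inv g) (filt_image g W) = W"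
  using bij_is_inj[of g] by (simp add: filt_image_def image_image fun_eq_iff)

lemma adapted_basis_linear_image:
  assumes g: "linear g" "bij g" and B: "adapted_basis Phi B wt"
  shows "adapted_basis (filt_image g ` Phi) (g ` B) (\<lambda>e X. wt (inv g e) (filt_image (inv g) X))"
  unfolding adapted_basis_def
proof (intro conjI ballI allI)
  show "independent (g ` B)"
    using linear_independent_injective_image[OF g(1) adapted_basisD(1)[OF B]]
      inj_on_subset[OF bij_is_inj[OF g(2)] subset_UNIV] by blast
  show "span (g ` B) = UNIV"
    using span_linear_image[OF g(1), of B] adapted_basisD(2)[OF B] bij_is_surj[OF g(2)] by simp
  fix X k assume "X \<in> filt_image g ` Phi"
  then obtain W where W: "W \<in> Phi" "X = filt_image g W" by blast
  have "g ` {b\<in>B. wt b W \<le> k} = {e\<in>g ` B. wt (inv g e) W \<le> k}"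
    using bij_is_inj[OF g(2)] by auto
  then have "span {e\<in>g ` B. wt (inv g e) W \<le> k} = g ` W k"
    using span_linear_image[OF g(1)] adapted_basis_span_eq[OF B W(1)] by metis
  moreover have "filt_image (inv g) X = W" using W(2) filt_image_inv[OF g(2)] by simp
  ultimately show "X k = span {e\<in>g ` B. wt (inv g e) (filt_image (inv g) X) \<le> k}"
    using W(2) by (simp add: filt_image_def)
qed

lemma adapted_basis_image_fixes_filtration:
  assumes "linear g" and B: "adapted_basis Phi B wt" and E: "adapted_basis Phi (g ` B) wt'"
    and W: "W \<in> Phi" and wts: "\<forall>b\<in>B. wt' (g b) W = wt b W"
  shows "g ` W k = W k"
proof -
  have "g ` {b\<in>B. wt b W \<le> k} = {e\<in>g ` B. wt' e W \<le> k}" using wts by auto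
  then have "g ` span {b\<in>B. wt b W \<le> k} = span {e\<in>g ` B. wt' e W \<le> k}"
    using span_linear_image[OF assms(1)] by metis
  then show ?thesis using adapted_basis_span_eq[OF B W] adapted_basis_span_eq[OF E W] by simp
qed

theorem proposition4p6p12:
  fixes \<mu> :: "'a::euclidean_space \<Rightarrow> 'a \<Rightarrow> real"
    and Phi Phi' :: "(int \<Rightarrow> 'a set) set"
  assumes "is_metric \<mu>"
    and "finite Phi'"
    and "\<forall>W\<in>Phi'. is_filtration W"
    and "has_compatible_splitting Phi'"
    and "Phi \<subseteq> Phi'"
    and "gives_compatible_splittings \<mu> Phi"
  shows "\<exists>g. linear g \<and> bij g \<and> (\<forall>W\<in>Phi. \<forall>k. g ` W k = W k) \<and>
             gives_compatible_splittings \<mu> (filt_image g ` Phi')"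
proof -
  obtain B wt where B: "adapted_basis Phi' B wt"
    using has_compatible_splitting_adapted_basis[OF assms(4)] .
  obtain E wt' where E: "adapted_basis Phi E wt'" and orth: "pairwise (\<lambda>x y. \<mu> x y = 0) E"
    using gives_compatible_splittings_orthogonal_adapted_basis[OF assms(1,6)] .
  have B_Phi: "adapted_basis Phi B wt" using adapted_basis_mono[OF assms(5) B] .
  obtain s where s: "bij_betw s B E" and wts: "\<forall>b\<in>B. \<forall>W\<in>Phi. wt' (s b) W = wt b W"
    using adapted_bases_weight_preserving_bij[OF finite_subset[OF assms(5,2)] B_Phi E] .
  obtain g where g: "linear g" "bij g" and gs: "\<forall>b\<in>B. g b = s b"
    using bij_betw_bases_linear_extension[OF adapted_basisD[OF B] adapted_basisD(2)[OF E] s] .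
  have gB: "g ` B = E" using gs s by (simp add: bij_betw_def)
  have "g ` W k = W k" if "W \<in> Phi" for W k
    using adapted_basis_image_fixes_filtration[OF g(1) B_Phi _ that] E gB gs wts that by simp
  moreover have "gives_compatible_splittings \<mu> (filt_image g ` Phi')"
    using orthogonal_adapted_basis_gives_compatible_splittings[OF assms(1) _ orth]
      adapted_basis_linear_image[OF g B] gB by simp
  ultimately show ?thesis using g by blast
qed

end
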